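(* Let $\phi$ be a propositional team formula (built from literals $p,\neg p$, the constant $\bot$, the constant $NE$, dependence atoms $=\!(\overline\alpha,\beta)$, inclusion atoms $\overline\alpha\subseteq\overline\alpha'$ and independence atoms $\overline\alpha\perp\overline\beta$ over classical propositional formulas, using $\wedge,\otimes,\vee,\circledast$), let $p\in Prop$, and suppose $\phi$ is downward closed. Then $\phi\models \phi[p|\top]\otimes\phi[p|\bot]$, i.e. every team satisfying $\phi$ satisfies $\phi[p|\top]\otimes\phi[p|\bot]$.
   Context: $Prop$ is a nonempty set of propositional letters. A team is a set $X$ of valuations $s:Prop\to\{0,1\}$. Semantics: $X\models\bot$ iff $X=\emptyset$; $X\models p$ iff $s(p)=1$ for all $s\in X$; $X\models\neg p$ iff $s(p)=0$ for all $s\in X$; $X\models NE$ iff $X\neq\emptyset$; $X\models\phi_1\wedge\phi_2$ iff $X\models\phi_1$ and $X\models\phi_2$; $X\models\phi_1\otimes\phi_2$ iff there are $X_1,X_2$ with $X=X_1\cup X_2$, $X_1\models\phi_1$, $X_2\models\phi_2$; $X\models\phi_1\vee\phi_2$ iff $X\models\phi_1$ or $X\models\phi_2$; $X\models\phi_1\circledast\phi_2$ iff $X=\emptyset$ or there are nonempty $X_1,X_2$ with $X=X_1\cup X_2$, $X_1\models\phi_1$, $X_2\models\phi_2$. For classical propositional formulas $\alpha$, $s(\alpha)\in\{0,1\}$ is the usual truth value and $s(\overline\alpha)$ the tuple of values; $X\models{=}(\overline\alpha,\beta)$ iff for all $s,s'\in X$, $s(\overline\alpha)=s'(\overline\alpha)$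 implies $s(\beta)=s'(\beta)$; $X\models\overline\alpha\subseteq\overline\alpha'$ iff for every $s\in X$ there is $s'\in X$ with $s(\overline\alpha)=s'(\overline\alpha')$; $X\models\overline\alpha\perp\overline\beta$ iff for all $s,s'\in X$ there is $s''\in X$ with $s''(\overline\alpha)=s(\overline\alpha)$ and $s''(\overline\beta)=s'(\overline\beta)$. $\top$ denotes $q\otimes\neg q$ for a letter $q$ (true in every team). The substitution $\phi[p|\top]$ is defined inductively: $p\mapsto\top$, $\neg p\mapsto\bot$, $\bot\mapsto\bot$, other literals and $NE$ unchanged, commuting with all connectives, and inside atoms the classical formulas are substituted classically ($p$ replaced by a true constant); $\phi[p|\bot]$ is analogous with $p\mapsto\bot$, $\neg p\mapsto\top$. A formula $\phi$ is downward closed if $X\models\phi$ and $Y\subseteq X$ imply $Y\models\phi$. *)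

theory Defs
  imports Main
begin

text \<open>Propositional letters are the elements of the type 'p (a nonempty type,
matching "Prop is a nonempty set"). A valuation is a function 'p \<Rightarrow> bool
(True = 1, False = 0).\<close>

type_synonym 'p valuation = "'p \<Rightarrow> bool"
type_synonym 'p team = "'p valuation set"

datatype 'p cform =
    CVar 'p
  | CTrue
  | CFalse
  | CNot "'p cform"
  | CAnd "'p cform" "'p cform"
  | COr "'p cform" "'p cform"
  | CImp "'p cform" "'p cform"

primrec ceval :: "'p valuation \<Rightarrow> 'p cform \<Rightarrow> bool" where
  "ceval s (CVar q) = s q"
| "ceval s CTrue = True"
| "ceval s CFalse = False"
| "ceval s (CNot a) = (\<not> ceval s a)"
| "ceval s (CAnd a b) = (ceval s a \<and> ceval s b)"
| "ceval s (COr a b) = (ceval s a \<or> ceval s b)"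
| "ceval s (CImp a b) = (ceval s a \<longrightarrow> ceval s b)"

definition cevals :: "'p valuation \<Rightarrow> 'p cform list \<Rightarrow> bool list" where
  "cevals s as = map (ceval s) as"

datatype 'p tform =
    Lit 'p
  | NLit 'p
  | TBot
  | NE
  | Dep "'p cform list" "'p cform"
  | Incl "'p cform list" "'p cform list"
  | Indep "'p cform list" "'p cform list"
  | TAnd "'p tform" "'p tform"
  | Tensor "'p tform" "'p tform"
  | TOr "'p tform" "'p tform"
  | Star "'p tform" "'p tform"

primrec sat :: "'p team \<Rightarrow> 'p tform \<Rightarrow> bool" where
  "sat X (Lit q) = (\<forall>s\<in>X. s q)"
| "sat X (NLit q) = (\<forall>s\<in>X. \<not> s q)"
| "sat X TBot = (X = {})"
| "sat X NE = (X \<noteq> {})"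
| "sat X (Dep as b) = (\<forall>s\<in>X. \<forall>s'\<in>X. cevals s as = cevals s' as \<longrightarrow> ceval s b = ceval s' b)"
| "sat X (Incl as bs) = (\<forall>s\<in>X. \<exists>s'\<in>X. cevals s as = cevals s' bs)"
| "sat X (Indep as bs) = (\<forall>s\<in>X. \<forall>s'\<in>X. \<exists>s''\<in>X.
      cevals s'' as = cevals s as \<and> cevals s'' bs = cevals s' bs)"
| "sat X (TAnd f g) = (sat X f \<and> sat X g)"
| "sat X (Tensor f g) = (\<exists>X1 X2. X = X1 \<union> X2 \<and> sat X1 f \<and> sat X2 g)"
| "sat X (TOr f g) = (sat X f \<or> sat X g)"
| "sat X (Star f g) = (X = {} \<or> (\<exists>X1 X2. X1 \<noteq> {} \<and> X2 \<noteq> {} \<and> X = X1 \<union> X2 \<and> sat X1 f \<and> sat X2 g))"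

definition downward_closed :: "'p tform \<Rightarrow> bool" where
  "downward_closed f = (\<forall>X Y. sat X f \<longrightarrow> Y \<subseteq> X \<longrightarrow> sat Y f)"

definition TTop :: "'p \<Rightarrow> 'p tform" where
  "TTop q = Tensor (Lit q) (NLit q)"

primrec csubst :: "'p \<Rightarrow> 'p cform \<Rightarrow> 'p cform \<Rightarrow> 'p cform" where
  "csubst p c (CVar q) = (if q = p then c else CVar q)"
| "csubst p c CTrue = CTrue"
| "csubst p c CFalse = CFalse"
| "csubst p c (CNot a) = CNot (csubst p c a)"
| "csubst p c (CAnd a b) = CAnd (csubst p c a) (csubst p c b)"
| "csubst p c (COr a b) = COr (csubst p c a) (csubst p c b)"
| "csubst p c (CImp a b) = CImp (csubst p c a) (csubst p c b)"

text \<open>subst_top p f = f[p|\<top>], subst_bot p f = f[p|\<bot>]. The letter q in \<top>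
is taken to be p itself (any letter works since \<top> holds in every team).\<close>
primrec subst_top :: "'p \<Rightarrow> 'p tform \<Rightarrow> 'p tform" where
  "subst_top p (Lit q) = (if q = p then TTop p else Lit q)"
| "subst_top p (NLit q) = (if q = p then TBot else NLit q)"
| "subst_top p TBot = TBot"
| "subst_top p NE = NE"
| "subst_top p (Dep as b) = Dep (map (csubst p CTrue) as) (csubst p CTrue b)"
| "subst_top p (Incl as bs) = Incl (map (csubst p CTrue) as) (map (csubst p CTrue) bs)"
| "subst_top p (Indep as bs) = Indep (map (csubst p CTrue) as) (map (csubst p CTrue) bs)"
| "subst_top p (TAnd f g) = TAnd (subst_top p f) (subst_top p g)"
| "subst_top p (Tensor f g) = Tensor (subst_top p f) (subst_top p g)"
| "subst_top p (TOr f g) = TOr (subst_top p f) (subst_top p g)"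
| "subst_top p (Star f g) = Star (subst_top p f) (subst_top p g)"

primrec subst_bot :: "'p \<Rightarrow> 'p tform \<Rightarrow> 'p tform" where
  "subst_bot p (Lit q) = (if q = p then TBot else Lit q)"
| "subst_bot p (NLit q) = (if q = p then TTop p else NLit q)"
| "subst_bot p TBot = TBot"
| "subst_bot p NE = NE"
| "subst_bot p (Dep as b) = Dep (map (csubst p CFalse) as) (csubst p CFalse b)"
| "subst_bot p (Incl as bs) = Incl (map (csubst p CFalse) as) (map (csubst p CFalse) bs)"
| "subst_bot p (Indep as bs) = Indep (map (csubst p CFalse) as) (map (csubst p CFalse) bs)"
| "subst_bot p (TAnd f g) = TAnd (subst_bot p f) (subst_bot p g)"
| "subst_bot p (Tensor f g) = Tensor (subst_bot p f) (subst_bot p g)"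
| "subst_bot p (TOr f g) = TOr (subst_bot p f) (subst_bot p g)"
| "subst_bot p (Star f g) = Star (subst_bot p f) (subst_bot p g)"

end

theory Submission
  imports Defs
begin

text \<open>Split a team X satisfying the downward closed \<phi> into the subteam where p is true and the
subteam where p is false; both satisfy \<phi>. On a team where p is constantly true, \<phi>[p|\<top>] is
no harder to satisfy than \<phi>: the classical substitutions inside atoms change no values, \<top> holds in
every team, and \<not>p only holds in the empty team, where \<bot> holds too. Dually for \<phi>[p|\<bot>].\<close>

lemma sat_TTop: "sat X (TTop q)"
  unfolding TTop_def sat.simps
  by (rule exI[of _ "{s\<in>X. s q}"], rule exI[of _ "{s\<in>X. \<not> s q}"]) auto

lemma ceval_csubst: "ceval s c = s p \<Longrightarrow> ceval s (csubst p c a) = ceval s a"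
  by (induct a) auto

lemma cevals_csubst: "ceval s c = s p \<Longrightarrow> cevals s (map (csubst p c) as) = cevals s as"
  by (simp add: cevals_def ceval_csubst)

lemma sat_atom_csubst:
  assumes "\<forall>s\<in>X. ceval s c = s p"
  shows "sat X (Dep (map (csubst p c) as) (csubst p c b)) = sat X (Dep as b)"
    and "sat X (Incl (map (csubst p c) as) (map (csubst p c) bs)) = sat X (Incl as bs)"
    and "sat X (Indep (map (csubst p c) as) (map (csubst p c) bs)) = sat X (Indep as bs)"
  using bspec[OF assms] by (simp_all add: cevals_csubst ceval_csubst)

lemma sat_subst_top:
  assumes "\<forall>s\<in>Y. s p" and "sat Y f"
  shows "sat Y (subst_top p f)"
  using assms
proof (induct f arbitrary: Y)
  case (Lit q)
  then show ?case
    by (auto simp: sat_TTop)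
next
  case (NLit q)
  then show ?case
    by (auto simp: sat_TTop)
next
  case (Dep as b)
  then show ?case
    by (simp add: sat_atom_csubst del: sat.simps)
next
  case (Incl as bs)
  then show ?case
    by (simp add: sat_atom_csubst del: sat.simps)
next
  case (Indep as bs)
  then show ?case
    by (simp add: sat_atom_csubst del: sat.simps)
next
  case (Tensor f g)
  then obtain X1 X2 where Y: "Y = X1 \<union> X2" and "sat X1 f" "sat X2 g"
    by auto
  with Tensor have "sat X1 (subst_top p f)" "sat X2 (subst_top p g)"
    by blast+
  with Y show ?case
    by auto
next
  case (Star f g)
  show ?case
  proof (cases "Y = {}")
    case False
    with Star.prems(2) obtain X1 X2 where "X1 \<noteq> {}" "X2 \<noteq> {}"
      and Y: "Y = X1 \<union> X2" and "sat X1 f" "sat X2 g"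
      by auto
    moreover from Star this have "sat X1 (subst_top p f)" "sat X2 (subst_top p g)"
      by blast+
    ultimately show ?thesis
      by auto
  qed simp
next
  case (TOr f g)
  then show ?case
    by auto
qed simp_all

lemma sat_subst_bot:
  assumes "\<forall>s\<in>Y. \<not> s p" and "sat Y f"
  shows "sat Y (subst_bot p f)"
  using assms
proof (induct f arbitrary: Y)
  case (Lit q)
  then show ?case
    by (auto simp: sat_TTop)
next
  case (NLit q)
  then show ?case
    by (auto simp: sat_TTop)
next
  case (Dep as b)
  then show ?case
    by (simp add: sat_atom_csubst del: sat.simps)
next
  case (Incl as bs)
  then show ?case
    by (simp add: sat_atom_csubst del: sat.simps)
next
  case (Indep as bs)
  then show ?case
    by (simp add: sat_atom_csubst del: sat.simps)
next
  case (Tensor f g)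
  then obtain X1 X2 where Y: "Y = X1 \<union> X2" and "sat X1 f" "sat X2 g"
    by auto
  with Tensor have "sat X1 (subst_bot p f)" "sat X2 (subst_bot p g)"
    by blast+
  with Y show ?case
    by auto
next
  case (Star f g)
  show ?case
  proof (cases "Y = {}")
    case False
    with Star.prems(2) obtain X1 X2 where "X1 \<noteq> {}" "X2 \<noteq> {}"
      and Y: "Y = X1 \<union> X2" and "sat X1 f" "sat X2 g"
      by auto
    moreover from Star this have "sat X1 (subst_bot p f)" "sat X2 (subst_bot p g)"
      by blast+
    ultimately show ?thesis
      by auto
  qed simp
next
  case (TOr f g)
  then show ?case
    by auto
qed simp_all

theorem mainTheorem1:
  fixes phi :: "'p tform" and p :: 'p and X :: "'p team"
  assumes "downward_closed phi"
    and "sat X phi"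
  shows "sat X (Tensor (subst_top p phi) (subst_bot p phi))"
proof -
  define A where "A = {s\<in>X. s p}"
  define B where "B = {s\<in>X. \<not> s p}"
  have "sat Y phi" if "Y \<subseteq> X" for Y
    using assms that unfolding downward_closed_def by blast
  then have "sat A phi" "sat B phi"
    by (auto simp: A_def B_def)
  then have "sat A (subst_top p phi)" "sat B (subst_bot p phi)"
    by (auto intro!: sat_subst_top sat_subst_bot simp: A_def B_def)
  moreover have "X = A \<union> B"
    by (auto simp: A_def B_def)
  ultimately show ?thesis
    unfolding sat.simps by blast
qed

end
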